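(* Let ${\bm X}^\star={\bm V}^\star{\bm\Sigma}^\star{\bm V}^{\star\top}\in\mathbb{R}^{d\times d}$ where ${\bm V}^\star\in\mathbb{R}^{d\times r}$ has orthonormal columns and ${\bm\Sigma}^\star$ is an $r\times r$ diagonal matrix with positive diagonal entries. Let ${\bm V}_t\in\mathbb{R}^{d\times r}$ have orthonormal columns, let ${\bm U}_t\in\mathbb{R}^{d\times r'}$, and let ${\bm S}_t={\bm V}_t{\bm V}_t^\top{\bm U}_t$. If $\|{\bm V}^\star-{\bm V}_t\|\le0.1$, then $$\big\|({\bm X}^\star-{\bm S}_t{\bm S}_t^\top){\bm V}_t\big\|_{\mathrm F}^2\ge\frac25\big\|{\bm X}^\star-{\bm S}_t{\bm S}_t^\top\big\|_{\mathrm F}^2.$$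
   Context: $\|\cdot\|$ denotes the spectral norm and $\|\cdot\|_{\mathrm F}$ the Frobenius norm. (In the paper, ${\bm U}_t$ is a gradient descent iterate and ${\bm V}_t$ an associated orthonormal matrix; the lemma uses only the stated properties.) *)

theory Defs
  imports "HOL-Analysis.Analysis"
begin

text \<open>Matrices are rendered as real^'c^'r (r rows, c columns), product (**).\<close>

definition frob_norm :: "real^'c^'r \<Rightarrow> real" where
  "frob_norm A = sqrt (\<Sum>i\<in>UNIV. \<Sum>j\<in>UNIV. (A $ i $ j)\<^sup>2)"

definition spec_norm :: "real^'c^'r \<Rightarrow> real" where
  "spec_norm A = onorm (\<lambda>x. A *v x)"

definition orthonormal_cols :: "real^'c^'r \<Rightarrow> bool" where
  "orthonormal_cols V \<longleftrightarrow> transpose V ** V = mat 1"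

definition pos_diag :: "real^'n^'n \<Rightarrow> bool" where
  "pos_diag S \<longleftrightarrow> (\<forall>i j. i \<noteq> j \<longrightarrow> S $ i $ j = 0) \<and> (\<forall>i. S $ i $ i > 0)"

end

theory Submission imports Defs begin

text \<open>
  Let \<open>P = V\<^sub>t V\<^sub>t\<^sup>T\<close> be the orthogonal projection onto the column space of \<open>V\<^sub>t\<close>,
  \<open>Q = I - P\<close>, and \<open>M = X\<^sup>\<star> - S\<^sub>t S\<^sub>t\<^sup>T\<close>. The columns of \<open>S\<^sub>t\<close> lie in the range of \<open>P\<close>, so
  \<open>Q M = Q X\<^sup>\<star>\<close>, and splitting the symmetric matrix \<open>M\<close> into blocks gives
  \<open>\<parallel>M\<parallel>\<^sup>2 = \<parallel>M P\<parallel>\<^sup>2 + \<parallel>Q X\<^sup>\<star> P\<parallel>\<^sup>2 + \<parallel>Q X\<^sup>\<star> Q\<parallel>\<^sup>2\<close> with \<open>\<parallel>Q X\<^sup>\<star> P\<parallel> \<le> \<parallel>M P\<parallel> = \<parallel>M V\<^sub>t\<parallel>\<close>.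
  The rows of \<open>X\<^sup>\<star>\<close> lie in the range of \<open>V\<^sup>\<star>\<close>, where \<open>Q\<close> is small:
  \<open>\<parallel>Q V\<^sup>\<star> c\<parallel> = \<parallel>Q (V\<^sup>\<star> - V\<^sub>t) c\<parallel> \<le> 0.1 \<parallel>V\<^sup>\<star> c\<parallel>\<close>, hence \<open>99 \<parallel>Q X\<^sup>\<star> Q\<parallel>\<^sup>2 \<le> \<parallel>Q X\<^sup>\<star> P\<parallel>\<^sup>2\<close>.
  Altogether \<open>\<parallel>M\<parallel>\<^sup>2 \<le> (2 + 1/99) \<parallel>M V\<^sub>t\<parallel>\<^sup>2\<close>.
\<close>

definition orth_proj :: "real^'n^'n \<Rightarrow> bool" where
  "orth_proj P \<longleftrightarrow> transpose P = P \<and> P ** P = P"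

lemma matrix_diff_ldistrib: "(A::'a::ring_1^'n^'m) ** (B - C) = A ** B - A ** C"
  by (simp add: matrix_matrix_mult_def vec_eq_iff sum_subtractf right_diff_distrib)

lemma matrix_diff_rdistrib: "((A::'a::ring_1^'n^'m) - B) ** C = A ** C - B ** C"
  by (simp add: matrix_matrix_mult_def vec_eq_iff sum_subtractf left_diff_distrib)

lemma transpose_diff: "transpose ((A::'a::ab_group_add^'n^'m) - B) = transpose A - transpose B"
  by (simp add: transpose_def vec_eq_iff)

lemma matrix_matrix_mult_row: "(A ** B) $ i = A $ i v* B"
  by (simp add: matrix_matrix_mult_def vector_matrix_mult_def vec_eq_iff)

lemma frob_norm_nonneg: "0 \<le> frob_norm A"
  by (simp add: frob_norm_def sum_nonneg)

lemma frob_norm_sq_rows: "(frob_norm A)\<^sup>2 = (\<Sum>i\<in>UNIV. (norm (A $ i))\<^sup>2)"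
  unfolding frob_norm_def by (simp add: sum_nonneg norm_vec_def L2_set_def)

lemma frob_norm_transpose: "frob_norm (transpose A) = frob_norm (A::real^'c^'r)"
  unfolding frob_norm_def transpose_def by (simp add: sum.swap[of _ "UNIV::'c set"])

lemma norm_le_spec_norm: "norm (A *v x) \<le> spec_norm A * norm x"
  unfolding spec_norm_def by (rule onorm) simp

lemma pos_diag_transpose: "pos_diag S \<Longrightarrow> transpose S = S"
  unfolding pos_diag_def transpose_def by (auto simp: vec_eq_iff) metis

lemma orthonormal_cols_norm:
  assumes "orthonormal_cols V"
  shows "norm (V *v c) = norm c"
proof -
  have "inner (V *v c) (V *v c) = inner (c v* transpose V) (V *v c)" by simp
  also have "\<dots> = inner c (transpose V *v (V *v c))" by (rule dot_lmul_matrix)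
  also have "\<dots> = inner c c"
    using assms unfolding orthonormal_cols_def
    by (simp only: matrix_vector_mul_assoc matrix_vector_mul_lid)
  finally show ?thesis by (simp add: norm_eq_sqrt_inner)
qed

lemma orthonormal_cols_orth_proj: "orthonormal_cols V \<Longrightarrow> orth_proj (V ** transpose V)"
  unfolding orthonormal_cols_def orth_proj_def
  by (metis matrix_mul_assoc matrix_mul_rid matrix_transpose_mul transpose_transpose)

lemma orth_proj_compl: "orth_proj P \<Longrightarrow> orth_proj (mat 1 - P)"
  unfolding orth_proj_def by (simp add: transpose_diff matrix_diff_ldistrib matrix_diff_rdistrib)

lemma orth_proj_compl_mult: "orth_proj P \<Longrightarrow> (mat 1 - P) ** P = 0"
  unfolding orth_proj_def by (simp add: matrix_diff_rdistrib)

lemma orth_proj_vector_matrix_mult: "orth_proj P \<Longrightarrow> x v* P = P *v x"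
  unfolding orth_proj_def by (metis vector_transpose_matrix)

lemma orth_proj_norm_sq:
  assumes "orth_proj P"
  shows "(norm (P *v x))\<^sup>2 = inner x (P *v x)"
proof -
  have "(norm (P *v x))\<^sup>2 = inner (x v* P) (P *v x)"
    using orth_proj_vector_matrix_mult[OF assms] by (simp add: dot_square_norm)
  also have "\<dots> = inner x (P *v (P *v x))" by (rule dot_lmul_matrix)
  finally show ?thesis
    using assms by (simp add: orth_proj_def matrix_vector_mul_assoc)
qed

lemma orth_proj_pythagoras:
  assumes "orth_proj P"
  shows "(norm x)\<^sup>2 = (norm (P *v x))\<^sup>2 + (norm ((mat 1 - P) *v x))\<^sup>2"
proof -
  have "(norm ((mat 1 - P) *v x))\<^sup>2 = inner x x - 2 * inner x (P *v x) + (norm (P *v x))\<^sup>2"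
    by (simp add: matrix_vector_mult_diff_rdistrib dot_square_norm[symmetric]
        inner_diff_left inner_diff_right inner_commute)
  then show ?thesis
    using orth_proj_norm_sq[OF assms] by (simp add: dot_square_norm)
qed

lemma orth_proj_norm_le:
  assumes "orth_proj P"
  shows "norm (P *v x) \<le> norm x"
proof -
  have "(norm (P *v x))\<^sup>2 \<le> (norm x)\<^sup>2" using orth_proj_pythagoras[OF assms, of x] by simp
  then show ?thesis by (rule power2_le_imp_le) simp
qed

lemma frob_norm_sq_split_right:
  assumes "orth_proj P"
  shows "(frob_norm A)\<^sup>2 = (frob_norm (A ** P))\<^sup>2 + (frob_norm (A ** (mat 1 - P)))\<^sup>2"
  unfolding frob_norm_sq_rows matrix_matrix_mult_row sum.distrib[symmetric]
    orth_proj_vector_matrix_mult[OF assms] orth_proj_vector_matrix_mult[OF orth_proj_compl[OF assms]]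
  by (rule sum.cong[OF refl]) (rule orth_proj_pythagoras[OF assms])

lemma frob_norm_sq_split_left:
  assumes "orth_proj P"
  shows "(frob_norm A)\<^sup>2 = (frob_norm (P ** A))\<^sup>2 + (frob_norm ((mat 1 - P) ** A))\<^sup>2"
proof -
  have "transpose A ** R = transpose (R ** A)" if "orth_proj R" for R
    using that by (simp add: orth_proj_def matrix_transpose_mul)
  then show ?thesis
    using frob_norm_sq_split_right[OF assms, of "transpose A"] assms orth_proj_compl[OF assms]
    by (simp add: frob_norm_transpose)
qed

lemma frob_norm_orth_proj_mult_le:
  assumes "orth_proj P"
  shows "frob_norm (P ** A) \<le> frob_norm A"
proof -
  have "(frob_norm (P ** A))\<^sup>2 \<le> (frob_norm A)\<^sup>2"
    using frob_norm_sq_split_left[OF assms, of A] by simp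
  then show ?thesis by (rule power2_le_imp_le) (rule frob_norm_nonneg)
qed

lemma frob_norm_sq_symmetric_split:
  assumes "orth_proj P" and "transpose M = M"
  shows "(frob_norm M)\<^sup>2 = (frob_norm (M ** P))\<^sup>2 + (frob_norm ((mat 1 - P) ** M ** P))\<^sup>2
           + (frob_norm ((mat 1 - P) ** M ** (mat 1 - P)))\<^sup>2"
proof -
  let ?Q = "mat 1 - P"
  have "transpose (P ** M ** ?Q) = ?Q ** M ** P"
    using assms orth_proj_compl[OF assms(1)]
    by (simp add: orth_proj_def matrix_transpose_mul matrix_mul_assoc)
  then have "frob_norm (P ** (M ** ?Q)) = frob_norm (?Q ** M ** P)"
    by (metis frob_norm_transpose matrix_mul_assoc)
  then show ?thesis
    using frob_norm_sq_split_right[OF assms(1), of M] frob_norm_sq_split_left[OF assms(1), of "M ** ?Q"]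
    by (simp add: matrix_mul_assoc)
qed

lemma frob_norm_sq_symmetric_le:
  assumes P: "orth_proj P" and sym: "transpose M = M"
    and off_diag: "(1 - \<delta>\<^sup>2) * (frob_norm ((mat 1 - P) ** M ** (mat 1 - P)))\<^sup>2
                    \<le> \<delta>\<^sup>2 * (frob_norm ((mat 1 - P) ** M ** P))\<^sup>2"
  shows "(1 - \<delta>\<^sup>2) * (frob_norm M)\<^sup>2 \<le> (2 - \<delta>\<^sup>2) * (frob_norm (M ** P))\<^sup>2"
proof -
  have "frob_norm ((mat 1 - P) ** M ** P) \<le> frob_norm (M ** P)"
    using frob_norm_orth_proj_mult_le[OF orth_proj_compl[OF P], of "M ** P"]
    by (simp add: matrix_mul_assoc)
  then have "(frob_norm ((mat 1 - P) ** M ** P))\<^sup>2 \<le> (frob_norm (M ** P))\<^sup>2"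
    by (rule power_mono) (rule frob_norm_nonneg)
  then show ?thesis
    using frob_norm_sq_symmetric_split[OF P sym] off_diag by (simp add: algebra_simps)
qed

lemma frob_norm_mult_orthonormal_cols:
  assumes "orthonormal_cols V"
  shows "frob_norm (A ** V) = frob_norm (A ** (V ** transpose V))"
proof -
  have "(norm (m v* V))\<^sup>2 = (norm (m v* (V ** transpose V)))\<^sup>2" for m
  proof -
    have "(norm (m v* V))\<^sup>2 = inner m (V *v (m v* V))"
      by (simp add: dot_square_norm[symmetric] dot_lmul_matrix)
    also have "\<dots> = inner m ((V ** transpose V) *v m)"
      by (simp flip: matrix_vector_mul_assoc)
    finally show ?thesis
      using orthonormal_cols_orth_proj[OF assms]
      by (simp add: orth_proj_norm_sq orth_proj_vector_matrix_mult)
  qed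
  then have "(frob_norm (A ** V))\<^sup>2 = (frob_norm (A ** (V ** transpose V)))\<^sup>2"
    unfolding frob_norm_sq_rows matrix_matrix_mult_row by simp
  then show ?thesis by (simp add: frob_norm_nonneg)
qed

lemma norm_compl_proj_le:
  assumes V: "orthonormal_cols V" and W: "orthonormal_cols W" and "spec_norm (V - W) \<le> \<delta>"
  shows "norm ((mat 1 - W ** transpose W) *v (V *v c)) \<le> \<delta> * norm (V *v c)"
proof -
  let ?Q = "mat 1 - W ** transpose W"
  have "?Q ** W = 0"
    using W unfolding orthonormal_cols_def by (simp add: matrix_diff_rdistrib flip: matrix_mul_assoc)
  then have "?Q *v (V *v c) = ?Q *v ((V - W) *v c)"
    by (simp add: matrix_vector_mul_assoc matrix_diff_ldistrib)
  also have "norm \<dots> \<le> norm ((V - W) *v c)"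
    using orth_proj_compl[OF orthonormal_cols_orth_proj[OF W]] by (rule orth_proj_norm_le)
  also have "\<dots> \<le> spec_norm (V - W) * norm c" by (rule norm_le_spec_norm)
  also have "\<dots> \<le> \<delta> * norm (V *v c)"
    using assms(3) orthonormal_cols_norm[OF V] by (simp add: mult_right_mono)
  finally show ?thesis .
qed

lemma norm_sq_compl_proj_le:
  assumes V: "orthonormal_cols V" and W: "orthonormal_cols W" and "spec_norm (V - W) \<le> \<delta>"
  shows "(1 - \<delta>\<^sup>2) * (norm ((mat 1 - W ** transpose W) *v (V *v c)))\<^sup>2
           \<le> \<delta>\<^sup>2 * (norm (W ** transpose W *v (V *v c)))\<^sup>2"
proof -
  let ?y = "V *v c"
  have "(norm ((mat 1 - W ** transpose W) *v ?y))\<^sup>2 \<le> (\<delta> * norm ?y)\<^sup>2"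
    using norm_compl_proj_le[OF assms] by (simp add: power_mono)
  then show ?thesis
    using orth_proj_pythagoras[OF orthonormal_cols_orth_proj[OF W], of ?y]
    by (simp add: power_mult_distrib algebra_simps)
qed

lemma frob_norm_sq_compl_proj_le:
  assumes V: "orthonormal_cols V" and W: "orthonormal_cols W" and "spec_norm (V - W) \<le> \<delta>"
  shows "(1 - \<delta>\<^sup>2) * (frob_norm (B ** transpose V ** (mat 1 - W ** transpose W)))\<^sup>2
           \<le> \<delta>\<^sup>2 * (frob_norm (B ** transpose V ** (W ** transpose W)))\<^sup>2"
proof -
  have P: "orth_proj (W ** transpose W)" by (rule orthonormal_cols_orth_proj[OF W])
  have rows: "(B ** transpose V ** R) $ i = R *v (V *v B $ i)" if "orth_proj R" for R i
    by (simp add: matrix_matrix_mult_row orth_proj_vector_matrix_mult[OF that])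
  show ?thesis
    unfolding frob_norm_sq_rows rows[OF P] rows[OF orth_proj_compl[OF P]] sum_distrib_left
    by (rule sum_mono) (rule norm_sq_compl_proj_le[OF assms])
qed

theorem lemma9:
  fixes Vstar Vt :: "real^'r^'d"
    and Sigma :: "real^'r^'r"
    and Ut :: "real^'r2^'d"
    and Xstar St :: "_"
  assumes "orthonormal_cols Vstar"
    and "pos_diag Sigma"
    and "Xstar = Vstar ** Sigma ** transpose Vstar"
    and "orthonormal_cols Vt"
    and "St = Vt ** transpose Vt ** Ut"
    and "spec_norm (Vstar - Vt) \<le> 0.1"
  shows "(frob_norm ((Xstar - St ** transpose St) ** Vt))\<^sup>2
           \<ge> 2/5 * (frob_norm (Xstar - St ** transpose St))\<^sup>2"
proof -
  define P where "P = Vt ** transpose Vt"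
  define M where "M = Xstar - St ** transpose St"
  have P: "orth_proj P" unfolding P_def by (rule orthonormal_cols_orth_proj[OF assms(4)])
  have sym: "transpose M = M"
    using pos_diag_transpose[OF assms(2)]
    by (simp add: M_def assms(3) transpose_diff matrix_transpose_mul matrix_mul_assoc)
  have "(mat 1 - P) ** M = (mat 1 - Vt ** transpose Vt) ** (Vstar ** Sigma) ** transpose Vstar"
    using orth_proj_compl_mult[OF P]
    by (simp add: M_def P_def assms(3,5) matrix_diff_ldistrib matrix_mul_assoc)
  then have "(1 - 0.1\<^sup>2) * (frob_norm ((mat 1 - P) ** M ** (mat 1 - P)))\<^sup>2
               \<le> 0.1\<^sup>2 * (frob_norm ((mat 1 - P) ** M ** P))\<^sup>2"
    using frob_norm_sq_compl_proj_le[OF assms(1,4,6)]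
    by (simp add: P_def matrix_mul_assoc)
  then have "(1 - 0.1\<^sup>2) * (frob_norm M)\<^sup>2 \<le> (2 - 0.1\<^sup>2) * (frob_norm (M ** P))\<^sup>2"
    by (rule frob_norm_sq_symmetric_le[OF P sym])
  then have "99 * (frob_norm M)\<^sup>2 \<le> 199 * (frob_norm (M ** Vt))\<^sup>2"
    unfolding P_def frob_norm_mult_orthonormal_cols[OF assms(4), symmetric]
    by (simp add: power_divide)
  then show ?thesis
    unfolding M_def[symmetric] using zero_le_power2[of "frob_norm M"] by linarith
qed

end
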